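(* $J_n$ is the unique Chebyshev center of $\Omega_n$ relative to the metric space $(M_n(\mathbb{R}), \|\cdot\|_{\mathcal{S}_1})$ (i.e. the unique $A\in M_n(\mathbb{R})$ minimizing $\sup_{B\in\Omega_n}\|A-B\|_{\mathcal{S}_1}$), and the corresponding Chebyshev radius is $$ \inf_{A\in M_n(\mathbb{R})}\sup_{B\in\Omega_n}\|A-B\|_{\mathcal{S}_1} = n-1. $$
   Context: $\Omega_n$ denotes the set of $n\times n$ doubly stochastic matrices (nonnegative real entries, all row and column sums equal to $1$). $J_n$ is the $n\times n$ matrix with all entries equal to $1/n$. $\|A\|_{\mathcal{S}_1} := \sum_{i=1}^n\sigma_i(A)$ is the Schatten 1-norm (trace norm), where $\sigma_i(A)$ are the singular values of $A$. Given a constraint set $\mathcal{R}\subseteq M_n(\mathbb{R})$ and a norm, the Chebyshev radius of $\Omega_n$ is $\inf_{A\in\mathcal{R}}\sup_{B\in\Omega_n}\|A-B\|$ and a Chebyshev center is any $A\in\mathcal{R}$ attaining this infimum; "relative to the metric space $(M_n(\mathbb{R}),\|\cdot\|)$" means $\mathcal{R}=M_n(\mathbb{R})$. *)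

theory Defs
  imports "Jordan_Normal_Form.Char_Poly"
begin

text \<open>Singular values of a real n x n matrix A are the square roots of the eigenvalues of
  A^T A, counted with algebraic multiplicity (A^T A is symmetric positive semidefinite, so its
  characteristic polynomial splits over the reals with nonnegative roots).\<close>
definition trace_norm :: "real mat \<Rightarrow> real" where
  "trace_norm A =
     (let p = char_poly (transpose_mat A * A)
      in (\<Sum>r\<in>{x. poly p x = 0}. real (order r p) * sqrt r))"

definition doubly_stochastic :: "nat \<Rightarrow> real mat set" where
  "doubly_stochastic n = {B \<in> carrier_mat n n.
     (\<forall>i<n. \<forall>j<n. 0 \<le> B $$ (i, j)) \<and>
     (\<forall>i<n. (\<Sum>j<n. B $$ (i, j)) = 1) \<and>
     (\<forall>j<n. (\<Sum>i<n. B $$ (i, j)) = 1)}"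

definition Jmat :: "nat \<Rightarrow> real mat" where
  "Jmat n = mat n n (\<lambda>_. 1 / real n)"

definition cheb_dist :: "nat \<Rightarrow> real mat \<Rightarrow> real" where
  "cheb_dist n A = (SUP B\<in>doubly_stochastic n. trace_norm (A - B))"

end

theory Submission
  imports Defs
begin

text \<open>Upper bound: for doubly stochastic \<open>B\<close> the matrix \<open>J\<^sub>n - B\<close> kills the all-ones vector, so it
  has at most \<open>n - 1\<close> nonzero singular values, and its squared Frobenius norm is at most \<open>n - 1\<close>
  because the entries of \<open>B\<close> lie in \<open>[0, 1]\<close>; Cauchy-Schwarz gives \<open>\<parallel>J\<^sub>n - B\<parallel>\<^sub>1 \<le> n - 1\<close>.

  Lower bound and uniqueness: \<open>\<parallel>X\<parallel>\<^sub>1 \<ge> \<langle>W, X\<rangle>\<close> for every orthogonal \<open>W\<close>. Testing \<open>A\<close> against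
  the permutation matrices \<open>P\<^sub>\<sigma>\<close> with \<open>W = -P\<^sub>\<sigma> G\<close> for \<open>G\<close> the identity, the reflection
  \<open>I - (2/n) \<one> \<one>\<^sup>T\<close> and Givens rotations shows: if every \<open>\<parallel>A - B\<parallel>\<^sub>1 \<le> n - 1\<close>, then each
  permutation diagonal of \<open>A\<close> sums to \<open>1\<close> and \<open>A\<^bsub>\<sigma> p, q\<^esub> = A\<^bsub>\<sigma> q, p\<^esub>\<close>, which forces \<open>A = J\<^sub>n\<close>.\<close>

section \<open>Orthogonal diagonalisation of real symmetric matrices\<close>

definition householder_mat :: "nat \<Rightarrow> (nat \<Rightarrow> real) \<Rightarrow> real mat" where
  "householder_mat n w =
     mat n n (\<lambda>(i, j). (if i = j then 1 else 0) - 2 * w i * w j / (\<Sum>k<n. (w k)\<^sup>2))"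

lemma householder_mat_carrier [simp]: "householder_mat n w \<in> carrier_mat n n"
  by (simp add: householder_mat_def)

lemma transpose_householder_mat: "transpose_mat (householder_mat n w) = householder_mat n w"
  by (rule eq_matI) (auto simp: householder_mat_def mult.commute)

lemma householder_mat_involution: "householder_mat n w * householder_mat n w = 1\<^sub>m n"
proof (cases "(\<Sum>k<n. (w k)\<^sup>2) = 0")
  case True
  then have "householder_mat n w = 1\<^sub>m n" by (intro eq_matI) (auto simp: householder_mat_def)
  then show ?thesis by simp
next
  case False
  let ?s = "\<Sum>k<n. (w k)\<^sup>2"
  let ?\<delta> = "\<lambda>i j. if i = j then 1 else 0 :: real"
  show ?thesis
  proof (rule eq_matI)
    fix i j assume "i < dim_row (1\<^sub>m n)" "j < dim_col (1\<^sub>m n)"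
    then have i: "i < n" and j: "j < n" by auto
    have "(householder_mat n w * householder_mat n w) $$ (i, j)
        = (\<Sum>k<n. (?\<delta> i k - 2 * w i * w k / ?s) * (?\<delta> k j - 2 * w k * w j / ?s))"
      using i j by (simp add: householder_mat_def scalar_prod_def atLeast0LessThan)
    also have "\<dots> = (\<Sum>k<n. ?\<delta> i k * ?\<delta> k j) - (\<Sum>k<n. ?\<delta> i k * (2 * w k * w j / ?s))
        - (\<Sum>k<n. (2 * w i * w k / ?s) * ?\<delta> k j) + (4 * w i * w j / ?s\<^sup>2) * ?s"
      by (simp add: sum_subtractf sum.distrib sum_distrib_left sum_divide_distrib
        algebra_simps power2_eq_square)
    also have "\<dots> = ?\<delta> i j"
      using i j False by (simp add: if_distrib[of "\<lambda>x. x * _"] if_distrib[of "\<lambda>x. _ * x"]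
        if_distrib[of "\<lambda>x. x / _"]
          power2_eq_square cong: if_cong)
    finally show "(householder_mat n w * householder_mat n w) $$ (i, j) = 1\<^sub>m n $$ (i, j)"
      using i j by simp
  qed (auto simp: householder_mat_def)
qed

text \<open>The reflection in the hyperplane orthogonal to \<open>v - e\<^sub>0\<close> swaps the unit vectors \<open>v\<close> and
  \<open>e\<^sub>0\<close>; if \<open>v = e\<^sub>0\<close> the normal vanishes and the division by zero turns it into the identity.\<close>
lemma householder_mat_first_col:
  fixes v :: "real vec"
  assumes v: "v \<in> carrier_vec n" and unit: "v \<bullet> v = 1" and i: "i < n"
  shows "householder_mat n (\<lambda>k. v $ k - (if k = 0 then 1 else 0)) $$ (i, 0) = v $ i"
proof -
  define w where "w = (\<lambda>k. v $ k - (if k = 0 then 1 else 0 :: real))"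
  have n: "0 < n" using i by simp
  have vv: "(\<Sum>k<n. (v $ k)\<^sup>2) = 1"
    using unit v by (simp add: scalar_prod_def atLeast0LessThan power2_eq_square)
  have "(\<Sum>k<n. (w k)\<^sup>2) = (\<Sum>k<n. (v $ k)\<^sup>2) - 2 * (\<Sum>k<n. if k = 0 then v $ k else 0)
      + (\<Sum>k<n. if k = 0 then 1 else 0)"
    unfolding w_def by (simp add: power2_eq_square algebra_simps sum_subtractf sum.distrib
        if_distrib[of "\<lambda>x. _ * x"] sum_distrib_left cong: if_cong)
  also have "\<dots> = 2 - 2 * v $ 0" using vv n by simp
  finally have s: "(\<Sum>k<n. (w k)\<^sup>2) = 2 - 2 * v $ 0" .
  show ?thesis
  proof (cases "v $ 0 = 1")
    case True
    then have "\<forall>k\<in>{..<n}. (w k)\<^sup>2 = 0"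
      using s sum_nonneg_eq_0_iff[of "{..<n}" "\<lambda>k. (w k)\<^sup>2"] by simp
    then have "v $ i = (if i = 0 then 1 else 0)" using i by (simp add: w_def)
    then show ?thesis using i s True unfolding w_def[symmetric] by (simp add: householder_mat_def)
  next
    case False
    have "householder_mat n w $$ (i, 0) = (if i = 0 then 1 else 0)
      - 2 * w i * (v $ 0 - 1) / (2 - 2 * v $ 0)"
      unfolding householder_mat_def s using i n by (simp add: w_def)
    also have "\<dots> = v $ i" using False by (simp add: field_simps w_def)
    finally show ?thesis unfolding w_def .
  qed
qed

lemma symmetric_mat_real_eigenvalue:
  fixes M :: "real mat"
  assumes M: "M \<in> carrier_mat n n" and sym: "transpose_mat M = M" and n: "0 < n"
  shows "\<exists>e. eigenvalue M e"
proof -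
  define Mc where "Mc = map_mat complex_of_real M"
  have Mc: "Mc \<in> carrier_mat n n" using M by (simp add: Mc_def)
  obtain as where cp: "char_poly Mc = (\<Prod>a\<leftarrow>as. [:- a, 1:])" and len: "length as = n"
    using char_poly_factorized[OF Mc] by blast
  obtain a as' where as: "as = a # as'" using len n by (cases as) auto
  have root: "poly (char_poly Mc) a = 0" unfolding cp as by simp
  then obtain v where "eigenvector Mc v a"
    using eigenvalue_root_char_poly[OF Mc] unfolding eigenvalue_def by blast
  then have v: "v \<in> carrier_vec n" "v \<noteq> 0\<^sub>v n" "Mc *\<^sub>v v = a \<cdot>\<^sub>v v"
    unfolding eigenvector_def using Mc by auto
  have symm: "M $$ (i, j) = M $$ (j, i)" if "i < n" "j < n" for i j
    using sym M that by (metis carrier_matD index_transpose_mat(1))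
  txt \<open>The Rayleigh quotient \<open>v\<^sup>* M v / v\<^sup>* v\<close> of a real symmetric matrix is real.\<close>
  define S where "S = (\<Sum>i<n. cnj (v $ i) * (Mc *\<^sub>v v) $ i)"
  define N where "N = (\<Sum>i<n. (cmod (v $ i))\<^sup>2)"
  have S_eigen: "S = a * complex_of_real N"
    unfolding S_def N_def v(3) using v(1)
    by (simp add: sum_distrib_left algebra_simps complex_norm_square del: of_real_power)
  have S_expand: "S = (\<Sum>i<n. \<Sum>j<n. complex_of_real (M $$ (i, j)) * cnj (v $ i) * v $ j)"
    unfolding S_def using v(1) Mc M
    by (auto simp: Mc_def scalar_prod_def sum_distrib_left algebra_simps
      atLeast0LessThan intro!: sum.cong)
  have "cnj S = (\<Sum>i<n. \<Sum>j<n. complex_of_real (M $$ (i, j)) * v $ i * cnj (v $ j))"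
    unfolding S_expand by (simp add: algebra_simps)
  also have "\<dots> = (\<Sum>j<n. \<Sum>i<n. complex_of_real (M $$ (i, j)) * v $ i * cnj (v $ j))"
    by (rule sum.swap)
  also have "\<dots> = S" unfolding S_expand by (intro sum.cong refl) (simp add: symm)
  finally have real_S: "cnj S = S" .
  obtain i where i: "i < n" "v $ i \<noteq> 0"
    using v(1,2) by (metis carrier_vecD eq_vecI index_zero_vec(1) index_zero_vec(2))
  have "(cmod (v $ i))\<^sup>2 \<le> N" unfolding N_def by (rule member_le_sum) (use i in auto)
  moreover have "0 < (cmod (v $ i))\<^sup>2" using i by simp
  ultimately have "N \<noteq> 0" by linarith
  then have "cnj a = a" using real_S unfolding S_eigen by simp
  then have a: "a = complex_of_real (Re a)" by (metis Reals_cnj_iff complex_is_Real_iff of_real_Re)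
  have "complex_of_real (poly (char_poly M) (Re a))
      = poly (map_poly complex_of_real (char_poly M)) (complex_of_real (Re a))"
    by (simp add: of_real_hom.poly_map_poly)
  also have "\<dots> = poly (char_poly Mc) a"
    unfolding Mc_def of_real_hom.char_poly_hom[OF M] using a by simp
  finally have "poly (char_poly M) (Re a) = 0" using root by simp
  then show ?thesis using eigenvalue_root_char_poly[OF M] by blast
qed

lemma eigenvector_to_first_axis:
  fixes M :: "real mat"
  assumes M: "M \<in> carrier_mat (Suc m) (Suc m)" and ev: "eigenvalue M e"
  shows "\<exists>H. H \<in> carrier_mat (Suc m) (Suc m) \<and> H * H = 1\<^sub>m (Suc m) \<and> transpose_mat H = H
           \<and> (\<forall>i<Suc m. (H * M * H) $$ (i, 0) = (if i = 0 then e else 0))"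
proof -
  let ?n = "Suc m"
  obtain u where u: "u \<in> carrier_vec ?n" "u \<noteq> 0\<^sub>v ?n" "M *\<^sub>v u = e \<cdot>\<^sub>v u"
    using ev M unfolding eigenvalue_def eigenvector_def by auto
  obtain i where i: "i < ?n" "u $ i \<noteq> 0"
    using u(1,2) by (metis carrier_vecD eq_vecI index_zero_vec(1) index_zero_vec(2))
  have "(u $ i)\<^sup>2 \<le> (\<Sum>k<?n. (u $ k)\<^sup>2)" by (rule member_le_sum) (use i in auto)
  moreover have "0 < (u $ i)\<^sup>2" using i by simp
  ultimately have pos: "0 < u \<bullet> u"
    using u(1) by (simp add: scalar_prod_def atLeast0LessThan power2_eq_square)
  define v where "v = (1 / sqrt (u \<bullet> u)) \<cdot>\<^sub>v u"
  have v: "v \<in> carrier_vec ?n" unfolding v_def using u by simp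
  have unit: "v \<bullet> v = 1" unfolding v_def using u(1) pos
    by (simp add: power2_eq_square[symmetric] del: real_sqrt_mult)
  have Mv: "M *\<^sub>v v = e \<cdot>\<^sub>v v" unfolding v_def using mult_mat_vec[OF M u(1)] u(3)
    by (simp add: smult_smult_assoc mult.commute)
  define H where "H = householder_mat ?n (\<lambda>k. v $ k - (if k = 0 then 1 else 0))"
  have H: "H \<in> carrier_mat ?n ?n" and HH: "H * H = 1\<^sub>m ?n" and HT: "transpose_mat H = H"
    unfolding H_def by (auto simp: transpose_householder_mat householder_mat_involution)
  define e0 :: "real vec" where "e0 = unit_vec ?n 0"
  have e0: "e0 \<in> carrier_vec ?n" unfolding e0_def by simp
  have "\<forall>i<?n. H $$ (i, 0) = v $ i"
    unfolding H_def using householder_mat_first_col[OF v unit] by blast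
  then have He0: "H *\<^sub>v e0 = v" by (intro eq_vecI) (use H v in \<open>auto simp: e0_def\<close>)
  have Hv: "H *\<^sub>v v = e0" using HH e0 H unfolding He0[symmetric] by (simp flip: assoc_mult_mat_vec)
  have "(H * M * H) *\<^sub>v e0 = H *\<^sub>v (M *\<^sub>v (H *\<^sub>v e0))"
    using H M e0 by (simp add: assoc_mult_mat_vec[of "H * M" ?n ?n H ?n e0]
        assoc_mult_mat_vec[of H ?n ?n M ?n] del: assoc_mult_mat)
  also have "\<dots> = e \<cdot>\<^sub>v e0" unfolding He0 Mv mult_mat_vec[OF H v] Hv ..
  finally have "(H * M * H) *\<^sub>v e0 = e \<cdot>\<^sub>v e0" .
  moreover have "(H * M * H) $$ (i, 0) = ((H * M * H) *\<^sub>v e0) $ i" if "i < ?n" for i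
    using that H M by (simp add: e0_def)
  ultimately have "\<forall>i<?n. (H * M * H) $$ (i, 0) = (if i = 0 then e else 0)"
    by (simp add: e0_def)
  with H HH HT show ?thesis by blast
qed

lemma symmetric_mat_first_col_block:
  fixes N :: "real mat"
  assumes N: "N \<in> carrier_mat (Suc m) (Suc m)" and sym: "transpose_mat N = N"
    and col: "\<forall>i<Suc m. N $$ (i, 0) = (if i = 0 then e else 0)"
  shows "N = four_block_mat (mat 1 1 (\<lambda>_. e)) (0\<^sub>m 1 m) (0\<^sub>m m 1)
               (mat m m (\<lambda>(i, j). N $$ (Suc i, Suc j)))"
proof (rule eq_matI)
  fix i j assume "i < dim_row (four_block_mat (mat 1 1 (\<lambda>_. e)) (0\<^sub>m 1 m) (0\<^sub>m m 1)
      (mat m m (\<lambda>(i, j). N $$ (Suc i, Suc j))))"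
    and "j < dim_col (four_block_mat (mat 1 1 (\<lambda>_. e)) (0\<^sub>m 1 m) (0\<^sub>m m 1)
      (mat m m (\<lambda>(i, j). N $$ (Suc i, Suc j))))"
  then have i: "i < Suc m" and j: "j < Suc m" by auto
  have N_sym: "N $$ (0, j) = N $$ (j, 0)"
    using sym N j by (metis carrier_matD index_transpose_mat(1) zero_less_Suc)
  show "N $$ (i, j) = four_block_mat (mat 1 1 (\<lambda>_. e)) (0\<^sub>m 1 m) (0\<^sub>m m 1)
      (mat m m (\<lambda>(i, j). N $$ (Suc i, Suc j))) $$ (i, j)"
  proof (cases "i = 0 \<or> j = 0")
    case True
    then show ?thesis using i j col N_sym by auto
  next
    case False
    then obtain i' j' where "i = Suc i'" "j = Suc j'" by (metis not0_implies_Suc)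
    then show ?thesis using i j by simp
  qed
qed (use N in auto)

lemma orthogonal_diagonalisation_extend:
  fixes Q M :: "real mat"
  assumes Q: "Q \<in> carrier_mat m m" and QQ: "transpose_mat Q * Q = 1\<^sub>m m"
    and M: "M \<in> carrier_mat m m" and D: "transpose_mat Q * M * Q = mat_diag m d"
  defines "Q1 \<equiv> four_block_mat (1\<^sub>m 1) (0\<^sub>m 1 m) (0\<^sub>m m 1) Q"
  shows "Q1 \<in> carrier_mat (Suc m) (Suc m)" and "transpose_mat Q1 * Q1 = 1\<^sub>m (Suc m)"
    and "transpose_mat Q1 * four_block_mat (mat 1 1 (\<lambda>_. e)) (0\<^sub>m 1 m) (0\<^sub>m m 1) M * Q1
           = mat_diag (Suc m) (\<lambda>i. if i = 0 then e else d (i - 1))"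
proof -
  have QT: "transpose_mat Q \<in> carrier_mat m m" using Q by simp
  have E: "mat 1 1 (\<lambda>_. e) \<in> carrier_mat 1 1" by simp
  show "Q1 \<in> carrier_mat (Suc m) (Suc m)" unfolding Q1_def using Q by auto
  have Q1T: "transpose_mat Q1 = four_block_mat (1\<^sub>m 1) (0\<^sub>m 1 m) (0\<^sub>m m 1) (transpose_mat Q)"
    unfolding Q1_def by (subst transpose_four_block_mat[of _ 1 1 _ m _ m]) (use Q in auto)
  have "transpose_mat Q1 * Q1 = four_block_mat (1\<^sub>m 1) (0\<^sub>m 1 m) (0\<^sub>m m 1) (transpose_mat Q * Q)"
    unfolding Q1T unfolding Q1_def
      by (subst mult_four_block_mat[of _ 1 1 _ m _ m _ _ 1 _ m]) (use Q in auto)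
  then show "transpose_mat Q1 * Q1 = 1\<^sub>m (Suc m)" unfolding QQ by simp
  have "transpose_mat Q1 * four_block_mat (mat 1 1 (\<lambda>_. e)) (0\<^sub>m 1 m) (0\<^sub>m m 1) M
      = four_block_mat (mat 1 1 (\<lambda>_. e)) (0\<^sub>m 1 m) (0\<^sub>m m 1) (transpose_mat Q * M)"
    unfolding Q1T by (subst mult_four_block_mat[of _ 1 1 _ m _ m _ _ 1 _ m]) (use QT M E in auto)
  also have "\<dots> * Q1 = four_block_mat (mat 1 1 (\<lambda>_. e)) (0\<^sub>m 1 m) (0\<^sub>m m 1)
    (transpose_mat Q * M * Q)"
    unfolding Q1_def
      by (subst mult_four_block_mat[of _ 1 1 _ m _ m _ _ 1 _ m]) (use QT M E Q in auto)
  also have "\<dots> = mat_diag (Suc m) (\<lambda>i. if i = 0 then e else d (i - 1))"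
    unfolding D by (rule eq_matI) (auto simp: mat_diag_def)
  finally show "transpose_mat Q1 * four_block_mat (mat 1 1 (\<lambda>_. e)) (0\<^sub>m 1 m) (0\<^sub>m m 1) M * Q1
      = mat_diag (Suc m) (\<lambda>i. if i = 0 then e else d (i - 1))" .
qed

theorem symmetric_mat_orthogonal_diagonalisation:
  fixes M :: "real mat"
  assumes "M \<in> carrier_mat n n" and "transpose_mat M = M"
  shows "\<exists>Q d. Q \<in> carrier_mat n n \<and> transpose_mat Q * Q = 1\<^sub>m n
           \<and> transpose_mat Q * M * Q = mat_diag n d"
  using assms
proof (induction n arbitrary: M)
  case 0
  then show ?case
    by (intro exI[of _ "1\<^sub>m 0"] exI[of _ "\<lambda>_. 0"]) (auto intro!: eq_matI simp: mat_diag_def)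
next
  case (Suc m M)
  let ?n = "Suc m"
  have M: "M \<in> carrier_mat ?n ?n" and symM: "transpose_mat M = M" by fact+
  obtain e where "eigenvalue M e" using symmetric_mat_real_eigenvalue[OF M symM] by auto
  then obtain H where H: "H \<in> carrier_mat ?n ?n" and HH: "H * H = 1\<^sub>m ?n"
    and HT: "transpose_mat H = H"
    and col: "\<forall>i<?n. (H * M * H) $$ (i, 0) = (if i = 0 then e else 0)"
    using eigenvector_to_first_axis[OF M] by blast
  define N where "N = H * M * H"
  have N: "N \<in> carrier_mat ?n ?n" unfolding N_def using H M by simp
  have "transpose_mat N = transpose_mat H * transpose_mat M * transpose_mat H"
    unfolding N_def using H M
      by (simp add: transpose_mult[of _ ?n ?n _ ?n] assoc_mult_mat[of _ ?n ?n _ ?n _ ?n])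
  then have NT: "transpose_mat N = N" unfolding HT symM N_def .
  define M' where "M' = mat m m (\<lambda>(i, j). N $$ (Suc i, Suc j))"
  have M': "M' \<in> carrier_mat m m" unfolding M'_def by simp
  have "transpose_mat M' = M'" unfolding M'_def
    using NT N by (intro eq_matI) (auto, metis Suc_mono carrier_matD index_transpose_mat(1))
  then obtain Q' d where Q': "Q' \<in> carrier_mat m m" and Q'Q': "transpose_mat Q' * Q' = 1\<^sub>m m"
    and D: "transpose_mat Q' * M' * Q' = mat_diag m d"
    using Suc.IH[OF M'] by blast
  define Q1 where "Q1 = four_block_mat (1\<^sub>m 1) (0\<^sub>m 1 m) (0\<^sub>m m 1) Q'"
  note Q1 = orthogonal_diagonalisation_extend[OF Q' Q'Q' M' D, folded Q1_def]
  have N_block: "N = four_block_mat (mat 1 1 (\<lambda>_. e)) (0\<^sub>m 1 m) (0\<^sub>m m 1) M'"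
    unfolding M'_def using symmetric_mat_first_col_block[OF N NT] col N_def by blast
  define Q where "Q = H * Q1"
  have Q: "Q \<in> carrier_mat ?n ?n" unfolding Q_def using H Q1(1) by simp
  have QT: "transpose_mat Q = transpose_mat Q1 * H"
    unfolding Q_def using transpose_mult[OF H Q1(1)] HT by simp
  have "transpose_mat Q * Q = transpose_mat Q1 * (H * H) * Q1"
    unfolding QT unfolding Q_def using H Q1(1) by (simp add: assoc_mult_mat[of _ ?n ?n _ ?n _ ?n])
  then have "transpose_mat Q * Q = 1\<^sub>m ?n" using HH Q1 by simp
  moreover have "transpose_mat Q * M * Q = transpose_mat Q1 * N * Q1"
    unfolding QT unfolding Q_def N_def using H Q1(1) M
      by (simp add: assoc_mult_mat[of _ ?n ?n _ ?n _ ?n])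
  ultimately show ?case using Q Q1(3) N_block by auto
qed

section \<open>Trace norm, Frobenius inner product and duality\<close>

lemma order_prod_linear_factors:
  fixes d :: "nat \<Rightarrow> real"
  assumes "finite I"
  shows "order r (\<Prod>i\<in>I. [:- d i, 1:]) = card {i\<in>I. d i = r}"
  using assms
proof (induction I rule: finite_induct)
  case empty
  then show ?case by simp
next
  case (insert x F)
  have "(\<Prod>i\<in>F. [:- d i, 1:]) \<noteq> 0" using insert(1) by (simp add: prod_zero_iff)
  then have nz: "[:- d x, 1:] * (\<Prod>i\<in>F. [:- d i, 1:]) \<noteq> 0" by (intro no_zero_divisors) auto
  have "order r [:- d x, 1:] = (if d x = r then 1 else 0)"
    using order_power_n_n[of r 1] order_0I[of "[:- d x, 1:]" r] by auto
  moreover have "card {i\<in>insert x F. d i = r} = (if d x = r then 1 else 0) + card {i\<in>F. d i = r}"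
  proof -
    have "{i\<in>insert x F. d i = r}
        = (if d x = r then insert x {i\<in>F. d i = r} else {i\<in>F. d i = r})"
      by auto
    then show ?thesis using insert by auto
  qed
  ultimately show ?case using insert order_mult[OF nz] by simp
qed

lemma trace_norm_of_char_poly:
  fixes X :: "real mat" and d :: "nat \<Rightarrow> real"
  assumes cp: "char_poly (transpose_mat X * X) = (\<Prod>i<n. [:- d i, 1:])"
  shows "trace_norm X = (\<Sum>i<n. sqrt (d i))"
proof -
  have roots: "{x. poly (\<Prod>i<n. [:- d i, 1:]) x = 0} = d ` {..<n}"
    by (auto simp: poly_prod prod_zero_iff)
  have "trace_norm X = (\<Sum>r\<in>d ` {..<n}. real (card {i\<in>{..<n}. d i = r}) * sqrt r)"
    unfolding trace_norm_def Let_def cp roots order_prod_linear_factors[OF finite_lessThan] ..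
  also have "\<dots> = (\<Sum>r\<in>d ` {..<n}. (\<Sum>i\<in>{i\<in>{..<n}. d i = r}. sqrt (d i)))"
    by (intro sum.cong refl) simp
  also have "\<dots> = (\<Sum>i<n. sqrt (d i))"
    by (rule sum.image_gen[symmetric]) simp
  finally show ?thesis .
qed

lemma trace_norm_orthogonal_diagonalisation:
  fixes X :: "real mat"
  assumes X: "X \<in> carrier_mat n n"
  shows "\<exists>Q d. Q \<in> carrier_mat n n \<and> transpose_mat Q * Q = 1\<^sub>m n \<and> Q * transpose_mat Q = 1\<^sub>m n
           \<and> transpose_mat (X * Q) * (X * Q) = mat_diag n d \<and> trace_norm X = (\<Sum>i<n. sqrt (d i))"
proof -
  define M where "M = transpose_mat X * X"
  have M: "M \<in> carrier_mat n n" unfolding M_def using X by simp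
  have "transpose_mat M = M" unfolding M_def
    using transpose_mult[of "transpose_mat X" n n X n] X by simp
  then obtain Q d where Q: "Q \<in> carrier_mat n n" and QQ: "transpose_mat Q * Q = 1\<^sub>m n"
    and QMQ: "transpose_mat Q * M * Q = mat_diag n d"
    using symmetric_mat_orthogonal_diagonalisation[OF M] by blast
  have QT: "transpose_mat Q \<in> carrier_mat n n" using Q by simp
  have QQ': "Q * transpose_mat Q = 1\<^sub>m n" using mat_mult_left_right_inverse[OF QT Q QQ] .
  have XQ: "transpose_mat (X * Q) * (X * Q) = transpose_mat Q * M * Q"
    unfolding M_def using transpose_mult[OF X Q] X Q by (simp add: assoc_mult_mat[of _ n n _ n _ n])
  have "Q * mat_diag n d * transpose_mat Q = (Q * transpose_mat Q) * M * (Q * transpose_mat Q)"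
    unfolding QMQ[symmetric] using Q M by (simp add: assoc_mult_mat[of _ n n _ n _ n])
  then have "M = Q * mat_diag n d * transpose_mat Q" unfolding QQ' using M by simp
  then have "similar_mat_wit M (mat_diag n d) Q (transpose_mat Q)"
    using QQ QQ' M Q QT by (intro similar_mat_witI[of _ _ n]) auto
  then have "char_poly M = char_poly (mat_diag n d)"
    by (intro char_poly_similar) (auto simp: similar_mat_def)
  also have "\<dots> = (\<Prod>a\<leftarrow>diag_mat (mat_diag n d). [:- a, 1:])"
    by (rule char_poly_upper_triangular) (auto simp: upper_triangular_def mat_diag_def)
  also have "\<dots> = (\<Prod>i<n. [:- d i, 1:])"
    by (simp add: diag_mat_def mat_diag_def comp_def atLeast0LessThan[symmetric]
        prod.distinct_set_conv_list[of "[0..<n]", symmetric])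
  finally have "char_poly (transpose_mat X * X) = (\<Prod>i<n. [:- d i, 1:])" unfolding M_def .
  then show ?thesis using Q QQ QQ' XQ QMQ trace_norm_of_char_poly by metis
qed

lemma sum_product_square_le:
  fixes a b :: "'i \<Rightarrow> real"
  shows "(\<Sum>i\<in>S. a i * b i)\<^sup>2 \<le> (\<Sum>i\<in>S. (a i)\<^sup>2) * (\<Sum>i\<in>S. (b i)\<^sup>2)"
proof -
  have "0 \<le> (\<Sum>i\<in>S. \<Sum>j\<in>S. (a i * b j - a j * b i)\<^sup>2)" by (intro sum_nonneg) auto
  also have "\<dots> = (\<Sum>i\<in>S. \<Sum>j\<in>S. (a i)\<^sup>2 * (b j)\<^sup>2) + (\<Sum>i\<in>S. \<Sum>j\<in>S. (a j)\<^sup>2 * (b i)\<^sup>2)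
      - 2 * (\<Sum>i\<in>S. \<Sum>j\<in>S. (a i * b i) * (a j * b j))"
    by (simp add: sum_subtractf sum.distrib sum_distrib_left power2_eq_square algebra_simps)
  finally have "0 \<le> \<dots>" .
  moreover have "(\<Sum>i\<in>S. \<Sum>j\<in>S. (a j)\<^sup>2 * (b i)\<^sup>2) = (\<Sum>j\<in>S. \<Sum>i\<in>S. (a j)\<^sup>2 * (b i)\<^sup>2)"
    by (rule sum.swap)
  ultimately show ?thesis by (simp add: sum_product power2_eq_square)
qed

definition frobenius_inner :: "nat \<Rightarrow> real mat \<Rightarrow> real mat \<Rightarrow> real" where
  "frobenius_inner n W X = (\<Sum>k<n. \<Sum>i<n. W $$ (k, i) * X $$ (k, i))"

lemma frobenius_inner_mult_orthogonal:
  fixes Q W X :: "real mat"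
  assumes Q: "Q \<in> carrier_mat n n" and QQ: "Q * transpose_mat Q = 1\<^sub>m n"
    and W: "W \<in> carrier_mat n n" and X: "X \<in> carrier_mat n n"
  shows "frobenius_inner n (W * Q) (X * Q) = frobenius_inner n W X"
proof -
  have rows_orthonormal: "(\<Sum>j<n. Q $$ (i, j) * Q $$ (l, j)) = (if i = l then 1 else 0)"
    if "i < n" "l < n" for i l
  proof -
    have "(Q * transpose_mat Q) $$ (i, l) = (\<Sum>j<n. Q $$ (i, j) * Q $$ (l, j))"
      using Q that by (simp add: scalar_prod_def atLeast0LessThan)
    then show ?thesis using QQ that by simp
  qed
  have row_inner: "(\<Sum>j<n. (\<Sum>i<n. a i * Q $$ (i, j)) * (\<Sum>l<n. b l * Q $$ (l, j)))
      = (\<Sum>i<n. a i * b i)" for a b :: "nat \<Rightarrow> real"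
  proof -
    have "(\<Sum>j<n. (\<Sum>i<n. a i * Q $$ (i, j)) * (\<Sum>l<n. b l * Q $$ (l, j)))
        = (\<Sum>j<n. \<Sum>i<n. \<Sum>l<n. a i * b l * (Q $$ (i, j) * Q $$ (l, j)))"
      by (simp add: sum_product algebra_simps)
    also have "\<dots> = (\<Sum>i<n. \<Sum>l<n. \<Sum>j<n. a i * b l * (Q $$ (i, j) * Q $$ (l, j)))"
      by (subst sum.swap) (intro sum.cong refl sum.swap)
    also have "\<dots> = (\<Sum>i<n. \<Sum>l<n. a i * b l * (if i = l then 1 else 0))"
      by (intro sum.cong refl) (simp add: sum_distrib_left[symmetric] rows_orthonormal)
    also have "\<dots> = (\<Sum>i<n. a i * b i)"
      by (simp add: if_distrib[of "\<lambda>x. _ * x"] cong: if_cong)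
    finally show ?thesis .
  qed
  have "frobenius_inner n (W * Q) (X * Q)
      = (\<Sum>k<n. \<Sum>j<n. (\<Sum>i<n. W $$ (k, i) * Q $$ (i, j)) * (\<Sum>l<n. X $$ (k, l) * Q $$ (l, j)))"
    unfolding frobenius_inner_def using W X Q
      by (intro sum.cong refl) (simp add: scalar_prod_def atLeast0LessThan)
  also have "\<dots> = frobenius_inner n W X" unfolding frobenius_inner_def row_inner ..
  finally show ?thesis .
qed

lemma mat_diag_gram_col:
  fixes Y :: "real mat"
  assumes Y: "Y \<in> carrier_mat n n" and D: "transpose_mat Y * Y = mat_diag n d" and j: "j < n"
  shows "(\<Sum>k<n. (Y $$ (k, j))\<^sup>2) = d j"
proof -
  have "(transpose_mat Y * Y) $$ (j, j) = (\<Sum>k<n. (Y $$ (k, j))\<^sup>2)"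
    using Y j by (simp add: scalar_prod_def atLeast0LessThan power2_eq_square)
  then show ?thesis using D j by (simp add: mat_diag_def)
qed

lemma mat_diag_gram_kernel:
  fixes Y :: "real mat"
  assumes Y: "Y \<in> carrier_mat n n" and D: "transpose_mat Y * Y = mat_diag n d"
    and u: "u \<in> carrier_vec n" "u \<noteq> 0\<^sub>v n" "Y *\<^sub>v u = 0\<^sub>v n"
  shows "\<exists>i<n. d i = 0"
proof -
  obtain i where i: "i < n" "u $ i \<noteq> 0"
    using u by (metis carrier_vecD eq_vecI index_zero_vec(1) index_zero_vec(2))
  have "(transpose_mat Y * Y) *\<^sub>v u = transpose_mat Y *\<^sub>v (Y *\<^sub>v u)"
    using Y u by (intro assoc_mult_mat_vec) auto
  then have "mat_diag n d *\<^sub>v u = 0\<^sub>v n"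
    unfolding D using Y u by (auto intro!: eq_vecI simp: scalar_prod_def)
  moreover have "(mat_diag n d *\<^sub>v u) $ i = d i * u $ i"
    using i u by (simp add: mat_diag_def scalar_prod_def atLeast0LessThan
        if_distrib[of "\<lambda>x. x * _"] cong: if_cong)
  ultimately show ?thesis using i by auto
qed

text \<open>After rotating both
  matrices by the \<open>Q\<close> diagonalising \<open>X\<^sup>T X\<close>, the columns of \<open>X Q\<close> are orthogonal with norms
  \<open>\<sigma>\<^sub>j\<close>, those of \<open>W Q\<close> are unit vectors, and Cauchy-Schwarz is applied column by column.\<close>
lemma frobenius_inner_le_trace_norm:
  fixes W X :: "real mat"
  assumes W: "W \<in> carrier_mat n n" and X: "X \<in> carrier_mat n n"
    and WW: "transpose_mat W * W = 1\<^sub>m n"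
  shows "frobenius_inner n W X \<le> trace_norm X"
proof -
  obtain Q d where Q: "Q \<in> carrier_mat n n" and QQ: "transpose_mat Q * Q = 1\<^sub>m n"
    and QQ': "Q * transpose_mat Q = 1\<^sub>m n"
    and D: "transpose_mat (X * Q) * (X * Q) = mat_diag n d"
    and tn: "trace_norm X = (\<Sum>i<n. sqrt (d i))"
    using trace_norm_orthogonal_diagonalisation[OF X] by blast
  have "transpose_mat (W * Q) * (W * Q) = transpose_mat Q * (transpose_mat W * W) * Q"
    using transpose_mult[OF W Q] W Q by (simp add: assoc_mult_mat[of _ n n _ n _ n])
  then have "transpose_mat (W * Q) * (W * Q) = mat_diag n (\<lambda>_. 1)" using WW QQ Q by simp
  from mat_diag_gram_col[OF _ this] have unit_cols: "(\<Sum>k<n. ((W * Q) $$ (k, j))\<^sup>2) = 1"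
    if "j < n" for j using W Q that by simp
  have "frobenius_inner n W X = (\<Sum>j<n. \<Sum>k<n. (W * Q) $$ (k, j) * (X * Q) $$ (k, j))"
    unfolding frobenius_inner_mult_orthogonal[OF Q QQ' W X, symmetric]
    unfolding frobenius_inner_def by (rule sum.swap)
  also have "\<dots> \<le> (\<Sum>j<n. sqrt (d j))"
  proof (intro sum_mono)
    fix j assume "j \<in> {..<n}"
    then have "(\<Sum>k<n. (W * Q) $$ (k, j) * (X * Q) $$ (k, j))\<^sup>2 \<le> 1 * d j"
      using sum_product_square_le[of "\<lambda>k. (W * Q) $$ (k, j)" "\<lambda>k. (X * Q) $$ (k, j)" "{..<n}"]
        unit_cols mat_diag_gram_col[OF _ D] X Q by simp
    then show "(\<Sum>k<n. (W * Q) $$ (k, j) * (X * Q) $$ (k, j)) \<le> sqrt (d j)"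
      by (simp add: real_le_rsqrt)
  qed
  finally show ?thesis using tn by simp
qed

lemma trace_norm_frobenius_singular_values:
  fixes X :: "real mat"
  assumes X: "X \<in> carrier_mat n n"
  shows "\<exists>d. (\<forall>j<n. 0 \<le> d j) \<and> trace_norm X = (\<Sum>j<n. sqrt (d j))
           \<and> frobenius_inner n X X = (\<Sum>j<n. d j)
           \<and> (\<forall>v\<in>carrier_vec n. v \<noteq> 0\<^sub>v n \<longrightarrow> X *\<^sub>v v = 0\<^sub>v n \<longrightarrow> (\<exists>i<n. d i = 0))"
proof -
  obtain Q d where Q: "Q \<in> carrier_mat n n" and QQ: "transpose_mat Q * Q = 1\<^sub>m n"
    and QQ': "Q * transpose_mat Q = 1\<^sub>m n"
    and D: "transpose_mat (X * Q) * (X * Q) = mat_diag n d"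
    and tn: "trace_norm X = (\<Sum>i<n. sqrt (d i))"
    using trace_norm_orthogonal_diagonalisation[OF X] by blast
  have XQ: "X * Q \<in> carrier_mat n n" using X Q by simp
  note col = mat_diag_gram_col[OF XQ D]
  have "frobenius_inner n X X = (\<Sum>j<n. \<Sum>k<n. ((X * Q) $$ (k, j))\<^sup>2)"
    unfolding frobenius_inner_mult_orthogonal[OF Q QQ' X X, symmetric]
    unfolding frobenius_inner_def by (subst sum.swap) (simp add: power2_eq_square)
  also have "\<dots> = (\<Sum>j<n. d j)" by (simp add: col)
  finally have fr: "frobenius_inner n X X = (\<Sum>j<n. d j)" .
  have nonneg: "\<forall>j<n. 0 \<le> d j" using col by (metis sum_nonneg zero_le_power2)
  have "\<exists>i<n. d i = 0" if v: "v \<in> carrier_vec n" "v \<noteq> 0\<^sub>v n" "X *\<^sub>v v = 0\<^sub>v n" for v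
  proof (rule mat_diag_gram_kernel[OF XQ D])
    define u where "u = transpose_mat Q *\<^sub>v v"
    show u: "u \<in> carrier_vec n" unfolding u_def using Q v by simp
    have Qu: "Q *\<^sub>v u = v" unfolding u_def using Q v QQ' by (simp flip: assoc_mult_mat_vec)
    then show "u \<noteq> 0\<^sub>v n" using v Q by auto
    have "(X * Q) *\<^sub>v u = X *\<^sub>v (Q *\<^sub>v u)" using X Q u by (rule assoc_mult_mat_vec)
    then show "(X * Q) *\<^sub>v u = 0\<^sub>v n" using Qu v(3) by simp
  qed
  with nonneg tn fr show ?thesis by blast
qed

lemma sum_sqrt_le_sqrt_card_sum:
  fixes d :: "'i \<Rightarrow> real"
  assumes "finite S" "S \<subseteq> T" "finite T" and nonneg: "\<forall>j\<in>T. 0 \<le> d j"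
  shows "(\<Sum>j\<in>S. sqrt (d j)) \<le> sqrt (real (card S) * (\<Sum>j\<in>T. d j))"
proof (rule real_le_rsqrt)
  have "(\<Sum>j\<in>S. 1 * sqrt (d j))\<^sup>2 \<le> (\<Sum>j\<in>S. 1\<^sup>2) * (\<Sum>j\<in>S. (sqrt (d j))\<^sup>2)"
    by (rule sum_product_square_le)
  also have "(\<Sum>j\<in>S. (sqrt (d j))\<^sup>2) = (\<Sum>j\<in>S. d j)"
    using assms by (intro sum.cong refl) auto
  also have "(\<Sum>j\<in>S. d j) \<le> (\<Sum>j\<in>T. d j)"
    using assms by (intro sum_mono2) auto
  finally show "(\<Sum>j\<in>S. sqrt (d j))\<^sup>2 \<le> real (card S) * (\<Sum>j\<in>T. d j)"
    by (simp add: mult_left_mono)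
qed

lemma trace_norm_le_sqrt_frobenius:
  fixes X :: "real mat"
  assumes "X \<in> carrier_mat n n"
  shows "trace_norm X \<le> sqrt (real n * frobenius_inner n X X)"
  using trace_norm_frobenius_singular_values[OF assms]
    sum_sqrt_le_sqrt_card_sum[of "{..<n}" "{..<n}"] by fastforce

lemma trace_norm_le_sqrt_frobenius_singular:
  fixes X :: "real mat"
  assumes X: "X \<in> carrier_mat n n"
    and v: "v \<in> carrier_vec n" "v \<noteq> 0\<^sub>v n" "X *\<^sub>v v = 0\<^sub>v n"
  shows "trace_norm X \<le> sqrt (real (n - 1) * frobenius_inner n X X)"
proof -
  obtain d where nonneg: "\<forall>j<n. 0 \<le> d j" and tn: "trace_norm X = (\<Sum>j<n. sqrt (d j))"
    and fr: "frobenius_inner n X X = (\<Sum>j<n. d j)" and "\<exists>i<n. d i = 0"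
    using trace_norm_frobenius_singular_values[OF X] v by blast
  then obtain i where i: "i < n" "d i = 0" by blast
  have "trace_norm X = (\<Sum>j\<in>{..<n} - {i}. sqrt (d j))"
    unfolding tn using i by (simp add: sum.remove)
  also have "\<dots> \<le> sqrt (real (card ({..<n} - {i})) * (\<Sum>j<n. d j))"
    using nonneg by (intro sum_sqrt_le_sqrt_card_sum) auto
  finally show ?thesis using i fr by simp
qed

section \<open>Lower bounds from permutation matrices\<close>

definition perm_mat :: "nat \<Rightarrow> (nat \<Rightarrow> nat) \<Rightarrow> real mat" where
  "perm_mat n \<sigma> = mat n n (\<lambda>(i, j). if i = \<sigma> j then 1 else 0)"

lemma dim_perm_mat [simp]: "dim_row (perm_mat n \<sigma>) = n" "dim_col (perm_mat n \<sigma>) = n"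
  by (simp_all add: perm_mat_def)

lemma perm_mat_carrier [simp]: "perm_mat n \<sigma> \<in> carrier_mat n n"
  by (simp add: carrier_matI)

lemma perm_mat_doubly_stochastic:
  assumes \<sigma>: "bij_betw \<sigma> {..<n} {..<n}"
  shows "perm_mat n \<sigma> \<in> doubly_stochastic n"
proof -
  have row: "(\<Sum>j<n. perm_mat n \<sigma> $$ (i, j)) = 1" if i: "i < n" for i
  proof -
    obtain j0 where j0: "j0 < n" "\<sigma> j0 = i"
      using \<sigma> i by (metis bij_betw_iff_bijections lessThan_iff)
    have hit: "i = \<sigma> j \<longleftrightarrow> j = j0" if "j < n" for j
      using \<sigma> that j0 by (metis bij_betw_iff_bijections lessThan_iff)
    have "(\<Sum>j<n. perm_mat n \<sigma> $$ (i, j)) = (\<Sum>j<n. if j = j0 then 1 else 0)"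
      using i hit by (intro sum.cong refl) (simp add: perm_mat_def)
    then show ?thesis using j0 by simp
  qed
  have col: "(\<Sum>i<n. perm_mat n \<sigma> $$ (i, j)) = 1" if j: "j < n" for j
  proof -
    have "(\<Sum>i<n. perm_mat n \<sigma> $$ (i, j)) = (\<Sum>i<n. if i = \<sigma> j then 1 else 0)"
      using j by (intro sum.cong refl) (auto simp: perm_mat_def)
    then show ?thesis using \<sigma> j by (auto dest: bij_betw_apply)
  qed
  show ?thesis unfolding doubly_stochastic_def using row col by (auto simp: perm_mat_def)
qed

lemma perm_mat_orthogonal:
  assumes \<sigma>: "bij_betw \<sigma> {..<n} {..<n}"
  shows "transpose_mat (perm_mat n \<sigma>) * perm_mat n \<sigma> = 1\<^sub>m n"
proof (rule eq_matI)
  fix i j assume "i < dim_row (1\<^sub>m n)" "j < dim_col (1\<^sub>m n)"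
  then have i: "i < n" and j: "j < n" by auto
  have "\<sigma> i < n" "\<sigma> j < n" using \<sigma> i j by (auto dest: bij_betw_apply)
  have "(transpose_mat (perm_mat n \<sigma>) * perm_mat n \<sigma>) $$ (i, j)
      = (\<Sum>k<n. (if k = \<sigma> i then 1 else 0) * (if k = \<sigma> j then 1 else 0))"
    using i j by (simp add: perm_mat_def scalar_prod_def atLeast0LessThan)
  also have "\<dots> = (if \<sigma> i = \<sigma> j then 1 else 0)"
    using \<open>\<sigma> i < n\<close> \<open>\<sigma> j < n\<close> by (simp add: if_distrib[of "\<lambda>x. x * _"] cong: if_cong)
  also have "\<dots> = 1\<^sub>m n $$ (i, j)"
    using \<sigma> i j by (simp add: bij_betw_def inj_on_def)
  finally show "(transpose_mat (perm_mat n \<sigma>) * perm_mat n \<sigma>) $$ (i, j) = 1\<^sub>m n $$ (i, j)" .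
qed (auto simp: perm_mat_def)

lemma perm_mat_mult_index:
  fixes G :: "real mat"
  assumes \<sigma>: "bij_betw \<sigma> {..<n} {..<n}" and G: "G \<in> carrier_mat n n" and m: "m < n" and i: "i < n"
  shows "(perm_mat n \<sigma> * G) $$ (\<sigma> m, i) = G $$ (m, i)"
proof -
  have inj: "\<sigma> m = \<sigma> j \<longleftrightarrow> m = j" if "j < n" for j
    using \<sigma> m that by (auto simp: bij_betw_def inj_on_def)
  have "\<sigma> m < n" using \<sigma> m by (auto dest: bij_betw_apply)
  have "(perm_mat n \<sigma> * G) $$ (\<sigma> m, i) = (\<Sum>j<n. (if \<sigma> m = \<sigma> j then 1 else 0) * G $$ (j, i))"
    using \<open>\<sigma> m < n\<close> i G by (simp add: perm_mat_def scalar_prod_def atLeast0LessThan)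
  also have "\<dots> = (\<Sum>j<n. if j = m then G $$ (j, i) else 0)"
    by (intro sum.cong refl) (auto simp: inj)
  finally show ?thesis using m by simp
qed

text \<open>Lower bound by duality with the orthogonal witness \<open>W = - P\<^sub>\<sigma> G\<close>: its inner product with
  \<open>A - P\<^sub>\<sigma>\<close> is \<open>tr G - \<langle>G, P\<^sub>\<sigma>\<^sup>T A\<rangle>\<close>.\<close>
lemma trace_norm_diff_perm_mat_ge:
  fixes A G :: "real mat"
  assumes A: "A \<in> carrier_mat n n" and \<sigma>: "bij_betw \<sigma> {..<n} {..<n}"
    and G: "G \<in> carrier_mat n n" and GG: "transpose_mat G * G = 1\<^sub>m n"
  shows "(\<Sum>m<n. G $$ (m, m)) - (\<Sum>m<n. \<Sum>i<n. G $$ (m, i) * A $$ (\<sigma> m, i))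
           \<le> trace_norm (A - perm_mat n \<sigma>)"
proof -
  have \<sigma>_lt: "\<sigma> m < n" if "m < n" for m using \<sigma> that by (auto dest: bij_betw_apply)
  define P where "P = perm_mat n \<sigma>"
  have P: "P \<in> carrier_mat n n" unfolding P_def by simp
  define W where "W = - (P * G)"
  have W: "W \<in> carrier_mat n n" unfolding W_def using P G by simp
  have "transpose_mat W * W = transpose_mat G * (transpose_mat P * P) * G"
    unfolding W_def using P G
    by (simp add: transpose_uminus transpose_mult[OF P G] assoc_mult_mat[of _ n n _ n _ n])
  then have WW: "transpose_mat W * W = 1\<^sub>m n"
    using GG G unfolding P_def perm_mat_orthogonal[OF \<sigma>] by simp
  have W_index: "W $$ (\<sigma> m, i) = - G $$ (m, i)" if "m < n" "i < n" for m i
    using that P G perm_mat_mult_index[OF \<sigma> G that] \<sigma>_lt by (simp add: W_def P_def)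
  have P_index: "P $$ (\<sigma> m, i) = (if m = i then 1 else 0)" if "m < n" "i < n" for m i
    using that \<sigma> \<sigma>_lt by (auto simp: P_def perm_mat_def bij_betw_def inj_on_def)
  have "frobenius_inner n W (A - P)
      = (\<Sum>m<n. \<Sum>i<n. W $$ (\<sigma> m, i) * (A - P) $$ (\<sigma> m, i))"
    unfolding frobenius_inner_def by (rule sum.reindex_bij_betw[OF \<sigma>, symmetric])
  also have "\<dots> = (\<Sum>m<n. \<Sum>i<n. G $$ (m, i) * (if m = i then 1 else 0) - G $$ (m, i) * A $$ (\<sigma> m, i))"
    using A P by (intro sum.cong refl)
      (auto simp: W_index P_index \<sigma>_lt algebra_simps)
  also have "\<dots> = (\<Sum>m<n. \<Sum>i<n. G $$ (m, i) * (if m = i then 1 else 0))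
      - (\<Sum>m<n. \<Sum>i<n. G $$ (m, i) * A $$ (\<sigma> m, i))"
    by (simp only: sum_subtractf)
  also have "\<dots> = (\<Sum>m<n. G $$ (m, m)) - (\<Sum>m<n. \<Sum>i<n. G $$ (m, i) * A $$ (\<sigma> m, i))"
    by (simp add: if_distrib[of "\<lambda>x. _ * x"] cong: if_cong)
  finally show ?thesis
    using frobenius_inner_le_trace_norm[OF W minus_carrier_mat[OF P] WW, of A] unfolding P_def
    by simp
qed

definition perm_diag_sum :: "nat \<Rightarrow> real mat \<Rightarrow> (nat \<Rightarrow> nat) \<Rightarrow> real" where
  "perm_diag_sum n A \<sigma> = (\<Sum>m<n. A $$ (\<sigma> m, m))"

lemma sum_mat_carrier:
  assumes "A \<in> carrier_mat n n"
  shows "sum_mat A = (\<Sum>i<n. \<Sum>j<n. A $$ (i, j))"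
  using assms by (simp add: sum_mat_def sum.cartesian_product atLeast0LessThan)

lemma trace_norm_diff_perm_mat_ge_identity:
  assumes A: "A \<in> carrier_mat n n" and \<sigma>: "bij_betw \<sigma> {..<n} {..<n}"
  shows "real n - perm_diag_sum n A \<sigma> \<le> trace_norm (A - perm_mat n \<sigma>)"
proof -
  have "(\<Sum>m<n. \<Sum>i<n. 1\<^sub>m n $$ (m, i) * A $$ (\<sigma> m, i)) = perm_diag_sum n A \<sigma>"
    unfolding perm_diag_sum_def
    by (intro sum.cong refl) (simp add: if_distrib[of "\<lambda>x. x * _"] cong: if_cong)
  then show ?thesis
    using trace_norm_diff_perm_mat_ge[OF A \<sigma>, of "1\<^sub>m n"] by simp
qed

lemma trace_norm_diff_perm_mat_ge_reflection:
  assumes A: "A \<in> carrier_mat n n" and \<sigma>: "bij_betw \<sigma> {..<n} {..<n}" and n: "0 < n"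
  shows "real n - 2 - perm_diag_sum n A \<sigma> + 2 * sum_mat A / real n \<le> trace_norm (A - perm_mat n \<sigma>)"
proof -
  define G where "G = householder_mat n (\<lambda>_. 1)"
  have G: "G \<in> carrier_mat n n" and GG: "transpose_mat G * G = 1\<^sub>m n"
    unfolding G_def by (simp_all add: transpose_householder_mat householder_mat_involution)
  have G_index: "G $$ (m, i) = (if m = i then 1 else 0) - 2 / real n" if "m < n" "i < n" for m i
    using that by (simp add: G_def householder_mat_def)
  have "(\<Sum>m<n. G $$ (m, m)) = real n - 2"
    using n by (simp add: G_index sum_subtractf field_simps)
  moreover have "(\<Sum>m<n. \<Sum>i<n. G $$ (m, i) * A $$ (\<sigma> m, i))
      = (\<Sum>m<n. A $$ (\<sigma> m, m)) - 2 / real n * (\<Sum>m<n. \<Sum>i<n. A $$ (\<sigma> m, i))"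
    by (simp add: G_index algebra_simps sum_subtractf sum_distrib_left
        if_distrib[of "\<lambda>x. x * _"] cong: if_cong)
  moreover have "(\<Sum>m<n. \<Sum>i<n. A $$ (\<sigma> m, i)) = sum_mat A"
    unfolding sum_mat_carrier[OF A] by (rule sum.reindex_bij_betw[OF \<sigma>])
  ultimately show ?thesis
    using trace_norm_diff_perm_mat_ge[OF A \<sigma> G GG] by (simp add: perm_diag_sum_def)
qed

definition givens :: "nat \<Rightarrow> nat \<Rightarrow> real \<Rightarrow> real \<Rightarrow> nat \<Rightarrow> nat \<Rightarrow> real" where
  "givens p q c s m i =
     (if m = p then (if i = p then c else if i = q then - s else 0)
      else if m = q then (if i = p then s else if i = q then c else 0)
      else if m = i then 1 else 0)"

lemma sum_split_two:
  fixes f :: "nat \<Rightarrow> real"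
  assumes "p < n" "q < n" "p \<noteq> q"
  shows "(\<Sum>m<n. f m) = f p + f q + (\<Sum>m\<in>{..<n} - {p, q}. f m)"
proof -
  have "(\<Sum>m<n. f m) = (\<Sum>m\<in>{..<n} - {p, q}. f m) + (\<Sum>m\<in>{p, q}. f m)"
    by (rule sum.subset_diff) (use assms in auto)
  then show ?thesis using assms by simp
qed

lemma givens_orthonormal:
  assumes pq: "p < n" "q < n" "p \<noteq> q" and cs: "c\<^sup>2 + s\<^sup>2 = 1" and ij: "i < n" "j < n"
  shows "(\<Sum>m<n. givens p q c s m i * givens p q c s m j) = (if i = j then 1 else 0)"
proof -
  have "(\<Sum>m\<in>{..<n} - {p, q}. givens p q c s m i * givens p q c s m j)
      = (\<Sum>m\<in>{..<n} - {p, q}. if m = i then (if i = j then 1 else 0) else 0)"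
    by (intro sum.cong refl) (auto simp: givens_def)
  also have "\<dots> = (if i = j \<and> i \<noteq> p \<and> i \<noteq> q then 1 else 0)"
    using ij by (simp add: sum.delta')
  finally show ?thesis
    unfolding sum_split_two[OF pq] using pq cs
      by (auto simp: givens_def power2_eq_square algebra_simps)
qed

lemma givens_diag_sum:
  assumes pq: "p < n" "q < n" "p \<noteq> q"
  shows "(\<Sum>m<n. givens p q c s m m) = real n - 2 + 2 * c"
proof -
  have "(\<Sum>m\<in>{..<n} - {p, q}. givens p q c s m m) = (\<Sum>m\<in>{..<n} - {p, q}. 1)"
    by (intro sum.cong refl) (auto simp: givens_def)
  also have "\<dots> = real n - 2" using pq by (simp add: card_Diff_subset)
  finally show ?thesis unfolding sum_split_two[OF pq] using pq by (simp add: givens_def)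
qed

lemma givens_inner:
  fixes F :: "nat \<Rightarrow> nat \<Rightarrow> real"
  assumes pq: "p < n" "q < n" "p \<noteq> q"
  shows "(\<Sum>m<n. \<Sum>i<n. givens p q c s m i * F m i)
           = (\<Sum>m<n. F m m) + (c - 1) * (F p p + F q q) - s * F p q + s * F q p"
proof -
  have row_p: "(\<Sum>i<n. givens p q c s p i * F p i) = c * F p p - s * F p q"
    unfolding sum_split_two[OF pq] using pq by (simp add: givens_def)
  have row_q: "(\<Sum>i<n. givens p q c s q i * F q i) = s * F q p + c * F q q"
    unfolding sum_split_two[OF pq] using pq by (simp add: givens_def)
  have row_other: "(\<Sum>i<n. givens p q c s m i * F m i) = F m m" if "m \<in> {..<n} - {p, q}" for m
  proof -
    have "(\<Sum>i<n. givens p q c s m i * F m i) = (\<Sum>i<n. if i = m then F m m else 0)"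
      by (intro sum.cong refl) (use that in \<open>auto simp: givens_def\<close>)
    then show ?thesis using that by simp
  qed
  have "(\<Sum>m<n. \<Sum>i<n. givens p q c s m i * F m i)
      = (c * F p p - s * F p q) + (s * F q p + c * F q q) + (\<Sum>m\<in>{..<n} - {p, q}. F m m)"
    unfolding sum_split_two[OF pq, of "\<lambda>m. \<Sum>i<n. givens p q c s m i * F m i"] row_p row_q
    by (simp add: row_other)
  moreover have "(\<Sum>m<n. F m m) = F p p + F q q + (\<Sum>m\<in>{..<n} - {p, q}. F m m)"
    by (rule sum_split_two[OF pq])
  ultimately show ?thesis by (simp add: algebra_simps)
qed

lemma trace_norm_diff_perm_mat_ge_givens:
  assumes A: "A \<in> carrier_mat n n" and \<sigma>: "bij_betw \<sigma> {..<n} {..<n}"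
    and pq: "p < n" "q < n" "p \<noteq> q" and cs: "c\<^sup>2 + s\<^sup>2 = 1"
  shows "real n - 2 + 2 * c - (perm_diag_sum n A \<sigma> + (c - 1) * (A $$ (\<sigma> p, p) + A $$ (\<sigma> q, q))
           - s * A $$ (\<sigma> p, q) + s * A $$ (\<sigma> q, p)) \<le> trace_norm (A - perm_mat n \<sigma>)"
proof -
  define G where "G = mat n n (\<lambda>(m, i). givens p q c s m i)"
  have G: "G \<in> carrier_mat n n" unfolding G_def by simp
  have "transpose_mat G * G = 1\<^sub>m n"
    by (rule eq_matI)
      (auto simp: G_def scalar_prod_def atLeast0LessThan givens_orthonormal[OF pq cs])
  from trace_norm_diff_perm_mat_ge[OF A \<sigma> G this]
  have "(\<Sum>m<n. givens p q c s m m) - (\<Sum>m<n. \<Sum>i<n. givens p q c s m i * A $$ (\<sigma> m, i))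
      \<le> trace_norm (A - perm_mat n \<sigma>)"
    by (simp add: G_def)
  then show ?thesis unfolding givens_diag_sum[OF pq] givens_inner[OF pq] perm_diag_sum_def .
qed

section \<open>The upper bound at the centre\<close>

lemma doubly_stochastic_carrier: "B \<in> doubly_stochastic n \<Longrightarrow> B \<in> carrier_mat n n"
  by (simp add: doubly_stochastic_def)

lemma doubly_stochastic_entry_bounds:
  assumes B: "B \<in> doubly_stochastic n" and ij: "i < n" "j < n"
  shows "0 \<le> B $$ (i, j)" and "B $$ (i, j) \<le> 1"
proof -
  show "0 \<le> B $$ (i, j)" using B ij by (auto simp: doubly_stochastic_def)
  have "B $$ (i, j) \<le> (\<Sum>j<n. B $$ (i, j))"
    by (rule member_le_sum) (use B ij in \<open>auto simp: doubly_stochastic_def\<close>)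
  then show "B $$ (i, j) \<le> 1" using B ij by (auto simp: doubly_stochastic_def)
qed

lemma frobenius_Jmat_diff_le:
  assumes B: "B \<in> doubly_stochastic n" and n: "1 \<le> n"
  shows "frobenius_inner n (Jmat n - B) (Jmat n - B) \<le> real n - 1"
proof -
  have Bc: "B \<in> carrier_mat n n" using doubly_stochastic_carrier[OF B] .
  have row: "(\<Sum>i<n. (Jmat n - B) $$ (k, i) * (Jmat n - B) $$ (k, i)) \<le> 1 - 1 / real n"
    if k: "k < n" for k
  proof -
    have rs: "(\<Sum>i<n. B $$ (k, i)) = 1" using B k by (auto simp: doubly_stochastic_def)
    have "(\<Sum>i<n. (B $$ (k, i))\<^sup>2) \<le> (\<Sum>i<n. B $$ (k, i))"
      using doubly_stochastic_entry_bounds[OF B k]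
      by (intro sum_mono) (simp add: power2_eq_square mult_left_le)
    moreover have "(\<Sum>i<n. (Jmat n - B) $$ (k, i) * (Jmat n - B) $$ (k, i))
        = (\<Sum>i<n. 1 / (real n)\<^sup>2 - 2 / real n * B $$ (k, i) + (B $$ (k, i))\<^sup>2)"
      using k Bc by (intro sum.cong refl) (simp add: Jmat_def power2_eq_square algebra_simps)
    moreover have "(\<Sum>i<n. 1 / (real n)\<^sup>2 - 2 / real n * B $$ (k, i) + (B $$ (k, i))\<^sup>2)
        = real n / (real n)\<^sup>2 - 2 / real n * (\<Sum>i<n. B $$ (k, i)) + (\<Sum>i<n. (B $$ (k, i))\<^sup>2)"
      by (simp add: sum.distrib sum_subtractf sum_distrib_left)
    ultimately show ?thesis using rs n by (simp add: power2_eq_square)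
  qed
  have "frobenius_inner n (Jmat n - B) (Jmat n - B) \<le> (\<Sum>k<n. 1 - 1 / real n)"
    unfolding frobenius_inner_def by (intro sum_mono row) simp
  also have "\<dots> = real n - 1" using n by (simp add: field_simps)
  finally show ?thesis .
qed

lemma trace_norm_Jmat_diff_le:
  assumes n: "1 \<le> n" and B: "B \<in> doubly_stochastic n"
  shows "trace_norm (Jmat n - B) \<le> real n - 1"
proof -
  have Bc: "B \<in> carrier_mat n n" using doubly_stochastic_carrier[OF B] .
  define v :: "real vec" where "v = vec n (\<lambda>_. 1)"
  have v: "v \<in> carrier_vec n" unfolding v_def by simp
  have "v $ 0 \<noteq> (0\<^sub>v n :: real vec) $ 0" using n by (simp add: v_def)
  then have v0: "v \<noteq> 0\<^sub>v n" by metis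
  have "(Jmat n - B) *\<^sub>v v = 0\<^sub>v n"
  proof (rule eq_vecI)
    fix i assume "i < dim_vec (0\<^sub>v n :: real vec)"
    then have i: "i < n" by simp
    have "((Jmat n - B) *\<^sub>v v) $ i = (\<Sum>j<n. 1 / real n - B $$ (i, j))"
      using i Bc by (simp add: v_def Jmat_def scalar_prod_def atLeast0LessThan)
    also have "\<dots> = 0" using B i n by (simp add: sum_subtractf doubly_stochastic_def)
    finally show "((Jmat n - B) *\<^sub>v v) $ i = 0\<^sub>v n $ i" using i by simp
  qed (use Bc in simp)
  then have "trace_norm (Jmat n - B)
    \<le> sqrt (real (n - 1) * frobenius_inner n (Jmat n - B) (Jmat n - B))"
    using Bc v v0 by (intro trace_norm_le_sqrt_frobenius_singular) auto
  also have "\<dots> \<le> sqrt ((real n - 1) * (real n - 1))"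
  proof -
    have "(real n - 1) * frobenius_inner n (Jmat n - B) (Jmat n - B) \<le> (real n - 1) * (real n - 1)"
      using frobenius_Jmat_diff_le[OF B n] n by (intro mult_left_mono) auto
    moreover have "real (n - 1) = real n - 1" using n by (simp add: of_nat_diff)
    ultimately show ?thesis by (metis real_sqrt_le_mono)
  qed
  also have "\<dots> = real n - 1" using n by simp
  finally show ?thesis .
qed

lemma trace_norm_diff_doubly_stochastic_le:
  assumes A: "A \<in> carrier_mat n n" and B: "B \<in> doubly_stochastic n"
  shows "trace_norm (A - B) \<le> sqrt (real n * (\<Sum>k<n. \<Sum>i<n. (\<bar>A $$ (k, i)\<bar> + 1)\<^sup>2))"
proof -
  have Bc: "B \<in> carrier_mat n n" using doubly_stochastic_carrier[OF B] .
  have "frobenius_inner n (A - B) (A - B) \<le> (\<Sum>k<n. \<Sum>i<n. (\<bar>A $$ (k, i)\<bar> + 1)\<^sup>2)"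
    unfolding frobenius_inner_def
  proof (intro sum_mono)
    fix k i assume k: "k \<in> {..<n}" and i: "i \<in> {..<n}"
    have "0 \<le> B $$ (k, i)" "B $$ (k, i) \<le> 1" using doubly_stochastic_entry_bounds[OF B] k i by auto
    then have "\<bar>A $$ (k, i) - B $$ (k, i)\<bar> \<le> \<bar>A $$ (k, i)\<bar> + 1" by linarith
    then have "(A $$ (k, i) - B $$ (k, i))\<^sup>2 \<le> (\<bar>A $$ (k, i)\<bar> + 1)\<^sup>2"
      by (metis abs_ge_zero power2_abs power_mono)
    then show "(A - B) $$ (k, i) * (A - B) $$ (k, i) \<le> (\<bar>A $$ (k, i)\<bar> + 1)\<^sup>2"
      using k i A Bc by (simp add: power2_eq_square)
  qed
  then have "sqrt (real n * frobenius_inner n (A - B) (A - B))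
      \<le> sqrt (real n * (\<Sum>k<n. \<Sum>i<n. (\<bar>A $$ (k, i)\<bar> + 1)\<^sup>2))"
    by (intro real_sqrt_le_mono mult_left_mono) auto
  then show ?thesis
    using trace_norm_le_sqrt_frobenius[OF minus_carrier_mat[OF Bc, of A]] by linarith
qed

section \<open>Rigidity\<close>

text \<open>Used with \<open>K\<close> and \<open>D\<close> the trace and antisymmetric part of a \<open>2 \<times> 2\<close> block of \<open>P\<^sub>\<sigma>\<^sup>T A\<close>. The
  witness is the rational parametrisation \<open>(c, s) = ((1 - t\<^sup>2), 2 t) / (1 + t\<^sup>2)\<close> of the circle
  with \<open>t = D / (|2 - K| + 1)\<close>.\<close>
lemma rotation_gain_exists:
  fixes K D :: real
  assumes D: "D \<noteq> 0"
  shows "\<exists>c s. c\<^sup>2 + s\<^sup>2 = 1 \<and> 0 < (c - 1) * (2 - K) + s * D"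
proof -
  define a where "a = \<bar>2 - K\<bar> + 1"
  have a: "0 < a" "0 < a - (2 - K)" unfolding a_def by auto
  define t where "t = D / a"
  have t0: "0 < 1 + t\<^sup>2" by (simp add: add_pos_nonneg)
  define c where "c = (1 - t\<^sup>2) / (1 + t\<^sup>2)"
  define s where "s = 2 * t / (1 + t\<^sup>2)"
  have "c\<^sup>2 + s\<^sup>2 = ((1 - t\<^sup>2)\<^sup>2 + (2 * t)\<^sup>2) / (1 + t\<^sup>2)\<^sup>2"
    unfolding c_def s_def by (simp add: power_divide add_divide_distrib)
  also have "(1 - t\<^sup>2)\<^sup>2 + (2 * t)\<^sup>2 = (1 + t\<^sup>2)\<^sup>2" by (simp add: power2_eq_square algebra_simps)
  finally have cs: "c\<^sup>2 + s\<^sup>2 = 1" using t0 by simp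
  have "c - 1 = - 2 * t\<^sup>2 / (1 + t\<^sup>2)" unfolding c_def using t0 by (simp add: field_simps)
  then have "(c - 1) * (2 - K) + s * D = (- 2 * t\<^sup>2 * (2 - K) + 2 * t * D) / (1 + t\<^sup>2)"
    unfolding s_def by (simp add: add_divide_distrib diff_divide_distrib)
  also have "\<dots> = 2 * t * (D - t * (2 - K)) / (1 + t\<^sup>2)"
    by (simp add: algebra_simps power2_eq_square)
  also have "2 * t * (D - t * (2 - K)) = 2 * D\<^sup>2 * (a - (2 - K)) / a\<^sup>2"
    unfolding t_def using a by (simp add: field_simps power2_eq_square)
  finally have "(c - 1) * (2 - K) + s * D = 2 * D\<^sup>2 * (a - (2 - K)) / a\<^sup>2 / (1 + t\<^sup>2)" .
  moreover have "0 < 2 * D\<^sup>2 * (a - (2 - K)) / a\<^sup>2 / (1 + t\<^sup>2)"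
    using D a t0 by (intro divide_pos_pos mult_pos_pos) auto
  ultimately show ?thesis using cs by metis
qed

lemma bij_betw_add_mod:
  assumes n: "0 < n"
  shows "bij_betw (\<lambda>x. (x + k) mod n) {..<n} {..<n :: nat}"
proof -
  have img: "(\<lambda>x. (x + k) mod n) ` {..<n} = {..<n}"
  proof
    show "(\<lambda>x. (x + k) mod n) ` {..<n} \<subseteq> {..<n}" using n by auto
    show "{..<n} \<subseteq> (\<lambda>x. (x + k) mod n) ` {..<n}"
    proof
      fix y assume y: "y \<in> {..<n}"
      define x where "x = (y + (n - k mod n)) mod n"
      have "(x + k) mod n = (y + (n - k mod n) + k mod n) mod n"
        unfolding x_def by (simp add: mod_add_left_eq mod_add_right_eq)
      also have "y + (n - k mod n) + k mod n = y + n" using mod_less_divisor[OF n, of k] by arith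
      finally have "(x + k) mod n = y" using y by simp
      moreover have "x < n" unfolding x_def using n by simp
      ultimately show "y \<in> (\<lambda>x. (x + k) mod n) ` {..<n}" by force
    qed
  qed
  then have "inj_on (\<lambda>x. (x + k) mod n) {..<n}" by (intro eq_card_imp_inj_on) simp_all
  then show ?thesis using img unfolding bij_betw_def by simp
qed

lemma bij_betw_shift_mod:
  fixes \<sigma> :: "nat \<Rightarrow> nat"
  assumes \<sigma>: "bij_betw \<sigma> {..<n} {..<n}" and n: "0 < n"
  shows "bij_betw (\<lambda>m. (\<sigma> m + k) mod n) {..<n} {..<n}"
  using bij_betw_trans[OF \<sigma> bij_betw_add_mod[OF n, of k]] by (simp add: comp_def)

lemma sum_perm_diag_sum_shifts:
  assumes A: "A \<in> carrier_mat n n" and n: "0 < n"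
  shows "(\<Sum>k<n. perm_diag_sum n A (\<lambda>m. (\<sigma> m + k) mod n)) = sum_mat A"
proof -
  have "(\<Sum>k<n. perm_diag_sum n A (\<lambda>m. (\<sigma> m + k) mod n))
      = (\<Sum>m<n. \<Sum>k<n. A $$ ((\<sigma> m + k) mod n, m))"
    unfolding perm_diag_sum_def by (rule sum.swap)
  also have "\<dots> = (\<Sum>m<n. \<Sum>i<n. A $$ (i, m))"
  proof (rule sum.cong[OF refl])
    fix m
    have "bij_betw (\<lambda>k. (\<sigma> m + k) mod n) {..<n} {..<n}"
      using bij_betw_add_mod[OF n, of "\<sigma> m"] by (simp add: add.commute)
    then show "(\<Sum>k<n. A $$ ((\<sigma> m + k) mod n, m)) = (\<Sum>i<n. A $$ (i, m))"
      by (rule sum.reindex_bij_betw)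
  qed
  also have "\<dots> = sum_mat A" unfolding sum_mat_carrier[OF A] by (rule sum.swap)
  finally show ?thesis .
qed

locale chebyshev_competitor =
  fixes n :: nat and A :: "real mat"
  assumes n: "1 \<le> n" and carrier: "A \<in> carrier_mat n n"
    and radius: "\<And>B. B \<in> doubly_stochastic n \<Longrightarrow> trace_norm (A - B) \<le> real n - 1"
begin

lemma radius_perm_mat:
  assumes "bij_betw \<sigma> {..<n} {..<n}"
  shows "trace_norm (A - perm_mat n \<sigma>) \<le> real n - 1"
  using radius perm_mat_doubly_stochastic[OF assms] .

lemma perm_diag_sum_ge_one:
  assumes \<sigma>: "bij_betw \<sigma> {..<n} {..<n}"
  shows "1 \<le> perm_diag_sum n A \<sigma>"
  using trace_norm_diff_perm_mat_ge_identity[OF carrier \<sigma>] radius_perm_mat[OF \<sigma>] by simp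

lemma sum_mat_le: "sum_mat A \<le> real n"
proof -
  have n0: "0 < n" using n by simp
  have lower: "2 * sum_mat A / real n - 1 \<le> perm_diag_sum n A \<sigma>" if "bij_betw \<sigma> {..<n} {..<n}" for \<sigma>
    using trace_norm_diff_perm_mat_ge_reflection[OF carrier that n0]
      radius_perm_mat[OF that] by simp
  have "(\<Sum>k<n. 2 * sum_mat A / real n - 1) \<le> (\<Sum>k<n. perm_diag_sum n A (\<lambda>m. (m + k) mod n))"
    by (intro sum_mono lower bij_betw_shift_mod[of "\<lambda>m. m"]) (simp_all add: bij_betw_def n0)
  also have "\<dots> = sum_mat A" by (rule sum_perm_diag_sum_shifts[OF carrier n0])
  finally show ?thesis using n0 by (simp add: field_simps)
qed

text \<open>Each of the \<open>n\<close> shifted diagonal sums is at least \<open>1\<close> and together they sum to at most \<open>n\<close>.\<close>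
lemma perm_diag_sum_eq_one:
  assumes \<sigma>: "bij_betw \<sigma> {..<n} {..<n}"
  shows "perm_diag_sum n A \<sigma> = 1"
proof -
  have n0: "0 < n" using n by simp
  define excess where "excess k = perm_diag_sum n A (\<lambda>m. (\<sigma> m + k) mod n) - 1" for k
  have nonneg: "\<forall>k\<in>{..<n}. 0 \<le> excess k"
    unfolding excess_def using perm_diag_sum_ge_one[OF bij_betw_shift_mod[OF \<sigma> n0]] by simp
  have "(\<Sum>k<n. excess k) = sum_mat A - real n"
    unfolding excess_def using sum_perm_diag_sum_shifts[OF carrier n0] by (simp add: sum_subtractf)
  moreover have "0 \<le> (\<Sum>k<n. excess k)" using nonneg by (intro sum_nonneg) auto
  ultimately have "(\<Sum>k<n. excess k) = 0" using sum_mat_le by linarith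
  then have "excess 0 = 0" using sum_nonneg_eq_0_iff[of "{..<n}" excess] nonneg n0 by simp
  moreover have "perm_diag_sum n A (\<lambda>m. (\<sigma> m + 0) mod n) = perm_diag_sum n A \<sigma>"
    unfolding perm_diag_sum_def using \<sigma> by (intro sum.cong refl) (auto dest: bij_betw_apply)
  ultimately show ?thesis unfolding excess_def by simp
qed

lemma perm_transposed_entries_eq:
  assumes \<sigma>: "bij_betw \<sigma> {..<n} {..<n}" and pq: "p < n" "q < n" "p \<noteq> q"
  shows "A $$ (\<sigma> p, q) = A $$ (\<sigma> q, p)"
proof (rule ccontr)
  let ?K = "A $$ (\<sigma> p, p) + A $$ (\<sigma> q, q)"
  let ?D = "A $$ (\<sigma> p, q) - A $$ (\<sigma> q, p)"
  assume "A $$ (\<sigma> p, q) \<noteq> A $$ (\<sigma> q, p)"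
  then obtain c s where cs: "c\<^sup>2 + s\<^sup>2 = 1" and gain: "0 < (c - 1) * (2 - ?K) + s * ?D"
    using rotation_gain_exists[of ?D ?K] by auto
  have "real n - 1 + ((c - 1) * (2 - ?K) + s * ?D) \<le> trace_norm (A - perm_mat n \<sigma>)"
    using trace_norm_diff_perm_mat_ge_givens[OF carrier \<sigma> pq cs] perm_diag_sum_eq_one[OF \<sigma>]
    by (simp add: algebra_simps)
  then show False using radius_perm_mat[OF \<sigma>] gain by linarith
qed

lemma perm_diag_entries_eq:
  assumes \<sigma>: "bij_betw \<sigma> {..<n} {..<n}" and m: "m < n" and y: "y < n"
  shows "A $$ (\<sigma> m, m) = A $$ (\<sigma> y, y)"
proof (cases "m = y")
  case False
  let ?\<tau> = "\<sigma> \<circ> Transposition.transpose m y"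
  have "bij_betw ?\<tau> {..<n} {..<n}" using \<sigma> m y by (intro bij_betw_trans[of _ _ "{..<n}"]) auto
  from perm_transposed_entries_eq[OF this m y False] show ?thesis by simp
qed simp

text \<open>Every entry lies on the diagonal of a transposition, whose \<open>n\<close> entries agree and sum to \<open>1\<close>.\<close>
lemma eq_Jmat: "A = Jmat n"
proof (rule eq_matI)
  fix x y assume "x < dim_row (Jmat n)" "y < dim_col (Jmat n)"
  then have x: "x < n" and y: "y < n" by (auto simp: Jmat_def)
  let ?\<sigma> = "Transposition.transpose x y"
  have \<sigma>: "bij_betw ?\<sigma> {..<n} {..<n}" using x y by simp
  have "1 = perm_diag_sum n A ?\<sigma>" using perm_diag_sum_eq_one[OF \<sigma>] by simp
  also have "\<dots> = real n * A $$ (x, y)"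
    unfolding perm_diag_sum_def using perm_diag_entries_eq[OF \<sigma> _ y] by simp
  finally show "A $$ (x, y) = Jmat n $$ (x, y)" using x y by (simp add: Jmat_def field_simps)
qed (use carrier in \<open>auto simp: Jmat_def\<close>)

end

lemma id_doubly_stochastic: "perm_mat n (\<lambda>m. m) \<in> doubly_stochastic n"
  by (rule perm_mat_doubly_stochastic) (simp add: bij_betw_def)

lemma trace_norm_le_cheb_dist:
  assumes A: "A \<in> carrier_mat n n" and B: "B \<in> doubly_stochastic n"
  shows "trace_norm (A - B) \<le> cheb_dist n A"
  unfolding cheb_dist_def
  using trace_norm_diff_doubly_stochastic_le[OF A] by (intro cSUP_upper[OF B] bdd_aboveI2) blast

lemma cheb_dist_Jmat:
  assumes n: "1 \<le> n"
  shows "cheb_dist n (Jmat n) = real n - 1"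
proof (rule antisym)
  show "cheb_dist n (Jmat n) \<le> real n - 1"
    unfolding cheb_dist_def using id_doubly_stochastic
    by (intro cSUP_least trace_norm_Jmat_diff_le[OF n]) blast+
  have J: "Jmat n \<in> carrier_mat n n" by (simp add: Jmat_def)
  have "perm_diag_sum n (Jmat n) (\<lambda>m. m) = 1" using n by (simp add: perm_diag_sum_def Jmat_def)
  then have "real n - 1 \<le> trace_norm (Jmat n - perm_mat n (\<lambda>m. m))"
    using trace_norm_diff_perm_mat_ge_identity[OF J, of "\<lambda>m. m"] by (simp add: bij_betw_def)
  also have "\<dots> \<le> cheb_dist n (Jmat n)" by (rule trace_norm_le_cheb_dist[OF J id_doubly_stochastic])
  finally show "real n - 1 \<le> cheb_dist n (Jmat n)" .
qed

lemma cheb_dist_le_imp_eq_Jmat: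
  assumes n: "1 \<le> n" and A: "A \<in> carrier_mat n n" and le: "cheb_dist n A \<le> real n - 1"
  shows "A = Jmat n"
proof -
  interpret chebyshev_competitor n A
    using n A le trace_norm_le_cheb_dist[OF A] by unfold_locales force+
  show ?thesis by (rule eq_Jmat)
qed

theorem mainTheorem8:
  fixes n :: nat
  assumes "n \<ge> 1"
  shows "(\<forall>A\<in>carrier_mat n n. cheb_dist n (Jmat n) \<le> cheb_dist n A
            \<and> (cheb_dist n A = cheb_dist n (Jmat n) \<longrightarrow> A = Jmat n))
         \<and> (INF A\<in>carrier_mat n n. cheb_dist n A) = real n - 1"
proof -
  have J: "Jmat n \<in> carrier_mat n n" by (simp add: Jmat_def)
  have radius: "cheb_dist n (Jmat n) = real n - 1" using cheb_dist_Jmat[OF assms] .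
  have ge: "real n - 1 \<le> cheb_dist n A" if "A \<in> carrier_mat n n" for A
    using cheb_dist_le_imp_eq_Jmat[OF assms that] radius by force
  have "(INF A\<in>carrier_mat n n. cheb_dist n A) = real n - 1"
    using J ge radius by (intro antisym cINF_greatest) (auto intro!: cINF_lower2 bdd_belowI2)
  then show ?thesis using ge radius cheb_dist_le_imp_eq_Jmat[OF assms] by auto
qed

end
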